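(* Let $q\geq 0$ and $n\geq 0$ be integers. Paul has a winning strategy for the $q$-round pathological liar game with $1$ lie and initial state $(n,0)$ if and only if $$2^q\leq\begin{cases} n(q+1) & \text{if $n$ is even},\\ n(q+1)-(q-1) & \text{if $n$ is odd}.\end{cases}$$
   Context: Pathological liar game with $k=1$ lie: a state is a pair $(x_0,x_1)$ of nonnegative integers. In each of $q$ rounds Paul chooses a legal question $(a_0,a_1)$ with integers $0\leq a_i\leq x_i$, and Carole answers Y or N; the new state is $(a_0,\,a_1+x_0-a_0)$ after Y, or $(x_0-a_0,\,x_1-a_1+a_0)$ after N. Paul wins iff after $q$ rounds $x_0+x_1\geq 1$. *)

theory Defs
  imports Main
begin

definition yes_state :: "nat \<times> nat \<Rightarrow> nat \<times> nat \<Rightarrow> nat \<times> nat" where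
  "yes_state x a = (fst a, snd a + fst x - fst a)"

definition no_state :: "nat \<times> nat \<Rightarrow> nat \<times> nat \<Rightarrow> nat \<times> nat" where
  "no_state x a = (fst x - fst a, snd x - snd a + fst a)"

fun paul_wins :: "nat \<Rightarrow> nat \<times> nat \<Rightarrow> bool" where
  "paul_wins 0 x = (fst x + snd x \<ge> 1)"
| "paul_wins (Suc q) x =
     (\<exists>a0 a1. a0 \<le> fst x \<and> a1 \<le> snd x \<and>
        paul_wins q (yes_state x (a0, a1)) \<and> paul_wins q (no_state x (a0, a1)))"

end

theory Submission
  imports Defs
begin

(* With q rounds left, a state (x0, x1) has Berlekamp volume x0 (q + 1) + x1: a chip that has
   not lied yet survives along q + 1 answer sequences, a chip that has lied along exactly one.
   Every question splits the volume of a state exactly into the volumes after the two answers,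
   so Paul can only win if 2^q <= volume. If x0 is odd the chips without a lie cannot be halved,
   and the larger half carries q surplus volume; this forces the second inequality
   2^q + q <= volume + x1 + 1. Conversely, if both inequalities hold, Paul keeps them by asking
   about half of the chips without a lie and a balancing share of the others; the arithmetic
   only needs q^2 <= 2^q + 3 and q^2 + q < 2^q for q >= 5. Hence the two inequalities
   characterise the winning states, and the theorem is the case x1 = 0. *)

lemma square_plus_self_less_two_power:
  fixes q :: nat
  assumes "5 \<le> q"
  shows "q * q + q < 2 ^ q"
  using assms
proof (induction q rule: dec_induct)
  case base
  then show ?case by simp
next
  case (step q)
  have "Suc q * Suc q + Suc q = (q * q + q) + 2 * (q + 1)" by simp
  also have "\<dots> < 2 ^ q + 2 ^ q"
    using step.IH step.hyps(1) mult_le_mono1[of 5 q q] by arith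
  finally show ?case by simp
qed

lemma square_le_two_power: "q * q \<le> 2 ^ q + (3::nat)"
proof (cases "q \<le> 4")
  case True
  then have "q \<in> {0, 1, 2, 3, 4}" by auto
  then show ?thesis by auto
next
  case False
  then show ?thesis using square_plus_self_less_two_power[of q] by linarith
qed

lemma two_power_le_quadratic_cases:
  fixes h q :: nat
  assumes "h + 2 \<le> q" and "even h" and "2 ^ q + 1 \<le> h * (q + 1) + 2 * q"
  shows "q = 4 \<and> h = 2"
proof (cases "5 \<le> q")
  case True
  have "(h + 2) * (q + 1) \<le> q * (q + 1)" using assms(1) by (intro mult_le_mono1) simp
  then show ?thesis
    using assms(3) square_plus_self_less_two_power[OF True] by (simp add: algebra_simps)
next
  case False
  with assms(1) have "q \<in> {2, 3, 4}" and "h \<in> {0, 1, 2}" by auto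
  then show ?thesis using assms by auto
qed

fun volume :: "nat \<Rightarrow> nat \<times> nat \<Rightarrow> nat" where
  "volume q (x0, x1) = x0 * (q + 1) + x1"

fun winning_condition :: "nat \<Rightarrow> nat \<times> nat \<Rightarrow> bool" where
  "winning_condition q (x0, x1) \<longleftrightarrow>
     2 ^ q \<le> volume q (x0, x1) \<and> (odd x0 \<longrightarrow> 2 ^ q + q \<le> volume q (x0, x1) + x1 + 1)"

lemma volume_split: "volume q (a, y + b) + volume q (b, z + a) = volume (Suc q) (a + b, y + z)"
  by (simp add: algebra_simps)

lemma winning_condition_mono:
  "winning_condition q (x0, x1) \<Longrightarrow> x1 \<le> y1 \<Longrightarrow> winning_condition q (x0, y1)"
  by auto

lemma winning_condition_odd_from_smaller_part:
  assumes "winning_condition q (a, y + b)" and "a < b"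
  shows "2 ^ Suc q + Suc q \<le> volume (Suc q) (a + b, y + z) + (y + z) + 1"
proof -
  have "a * q + q \<le> b * q" using \<open>a < b\<close> mult_le_mono1[of "Suc a" b q] by simp
  then show ?thesis using assms(1) by (simp add: algebra_simps)
qed

lemma winning_condition_merge:
  assumes "winning_condition q (a, y + b)" and "winning_condition q (b, z + a)"
  shows "winning_condition (Suc q) (a + b, y + z)"
proof -
  have "2 ^ q \<le> volume q (a, y + b)" and "2 ^ q \<le> volume q (b, z + a)"
    using assms by (simp_all del: volume.simps)
  then have "2 ^ Suc q \<le> volume (Suc q) (a + b, y + z)"
    unfolding volume_split[symmetric] by simp
  moreover have "2 ^ Suc q + Suc q \<le> volume (Suc q) (a + b, y + z) + (y + z) + 1"
    if "odd (a + b)"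
  proof -
    from that have "a \<noteq> b" by auto
    then consider "a < b" | "b < a" by linarith
    then show ?thesis
      using winning_condition_odd_from_smaller_part[OF assms(1), of z]
        winning_condition_odd_from_smaller_part[OF assms(2), of y]
      by cases (simp_all add: ac_simps)
  qed
  ultimately show ?thesis by simp
qed

lemma winning_condition_even_split:
  assumes "winning_condition (Suc q) (2 * h, x1)"
  shows "winning_condition q (h, x1 div 2 + h)"
proof -
  define m where "m = x1 div 2"
  have "2 * 2 ^ q \<le> 2 * h * (q + 2) + x1"
    using assms by (simp add: algebra_simps)
  moreover have "x1 \<le> 2 * m + 1" by (simp add: m_def)
  ultimately have vol: "2 ^ q \<le> h * (q + 2) + m" by arith
  have "2 ^ q + q \<le> h * (q + 3) + 2 * m + 1"
  proof (cases "q \<le> h + 1")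
    case True
    then show ?thesis using vol by (simp add: algebra_simps)
  next
    case False
    then have "(h + 2) * (q + 1) \<le> q * (q + 1)" by (intro mult_le_mono1) simp
    then have "h * (q + 1) + q \<le> 2 ^ q + 1"
      using square_le_two_power[of q] by (simp add: algebra_simps)
    then show ?thesis using vol by (simp add: algebra_simps)
  qed
  then show ?thesis using vol by (simp add: m_def algebra_simps)
qed

lemma winning_condition_odd_split_few_lies:
  assumes "winning_condition (Suc q) (2 * h + 1, x1)" and "x1 \<le> q"
  shows "winning_condition q (h, x1 + h + 1)" and "winning_condition q (h + 1, h)"
proof -
  have "2 * 2 ^ q \<le> 2 * h * (q + 2) + 2 * x1 + 2"
    using assms(1) by (simp add: algebra_simps)
  then have vol: "2 ^ q \<le> h * (q + 2) + x1 + 1" by linarith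
  have "2 ^ q + q \<le> h * (q + 3) + 2 * x1 + 3"
  proof (cases "q \<le> h + x1 + 2")
    case True
    then show ?thesis using vol by (simp add: algebra_simps)
  next
    case False
    then have "(h + x1 + 3) * (q + 2) \<le> q * (q + 2)" by (intro mult_le_mono1) simp
    moreover have "x1 \<le> x1 * (q + 2)" by simp
    ultimately show ?thesis
      using vol square_le_two_power[of q] by (simp add: algebra_simps)
  qed
  then show "winning_condition q (h, x1 + h + 1)"
    using vol by (simp add: algebra_simps)
  have "2 ^ q \<le> h * (q + 3) + 2" if "even h"
  proof (cases "q \<le> h + 1")
    case True
    then show ?thesis using vol assms(2) by (simp add: algebra_simps)
  next
    case False
    then have "q = 4 \<and> h = 2"
      using two_power_le_quadratic_cases[of h q] \<open>even h\<close> vol assms(2)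
      by (simp add: algebra_simps)
    then show ?thesis using vol assms(2) by simp
  qed
  then show "winning_condition q (h + 1, h)"
    using vol assms(2) by (auto simp: algebra_simps)
qed

lemma winning_condition_odd_split_many_lies:
  assumes "winning_condition (Suc q) (2 * h + 1, x1)" and "q < x1"
  defines "m \<equiv> (x1 + q) div 2"
  shows "winning_condition q (h, m + h + 1)" and "winning_condition q (h + 1, x1 - m + h)"
proof -
  define r where "r = x1 - m"
  have m_bounds: "2 * m \<le> x1 + q" "x1 + q \<le> 2 * m + 1" unfolding m_def by presburger+
  then have "q \<le> m" "x1 = m + r" using assms(2) unfolding r_def by linarith+
  have "2 * 2 ^ q \<le> 2 * h * (q + 2) + x1 + q + 2"
    using assms(1) by (simp add: algebra_simps)
  then have vol: "2 ^ q \<le> h * (q + 2) + m + 1" using m_bounds by linarith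
  then show "winning_condition q (h, m + h + 1)"
    using \<open>q \<le> m\<close> by (simp add: algebra_simps)
  have "2 ^ q \<le> h * (q + 3) + 2 * r + 2" if "even h"
  proof (cases "m \<le> h + 2 * r + 1")
    case True
    then show ?thesis using vol by (simp add: algebra_simps)
  next
    case False
    then have "q = 4 \<and> h = 2"
      using two_power_le_quadratic_cases[of h q] \<open>even h\<close> vol m_bounds \<open>x1 = m + r\<close>
      by (simp add: algebra_simps)
    then show ?thesis using vol m_bounds \<open>x1 = m + r\<close> False assms(2) by simp
  qed
  then show "winning_condition q (h + 1, x1 - m + h)"
    using vol m_bounds \<open>x1 = m + r\<close> by (auto simp: algebra_simps)
qed

lemma yes_state_pair: "a0 \<le> x0 \<Longrightarrow> yes_state (x0, x1) (a0, a1) = (a0, a1 + (x0 - a0))"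
  by (simp add: yes_state_def)

lemma no_state_pair: "no_state (x0, x1) (a0, a1) = (x0 - a0, x1 - a1 + a0)"
  by (simp add: no_state_def)

lemma winning_condition_of_answers:
  assumes "a0 \<le> x0" and "a1 \<le> x1"
    and "winning_condition q (yes_state (x0, x1) (a0, a1))"
    and "winning_condition q (no_state (x0, x1) (a0, a1))"
  shows "winning_condition (Suc q) (x0, x1)"
proof -
  have "winning_condition (Suc q) (a0 + (x0 - a0), a1 + (x1 - a1))"
    using assms(3,4) winning_condition_merge[of q a0 a1 "x0 - a0" "x1 - a1"]
    by (simp only: yes_state_pair[OF assms(1)] no_state_pair)
  then show ?thesis using assms(1,2) by simp
qed

lemma winning_question_exists:
  assumes "winning_condition (Suc q) (x0, x1)"
  obtains a0 a1 where "a0 \<le> x0" and "a1 \<le> x1"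
    and "winning_condition q (yes_state (x0, x1) (a0, a1))"
    and "winning_condition q (no_state (x0, x1) (a0, a1))"
proof -
  define h where "h = x0 div 2"
  \<comment> \<open>After the question (h, a1) the no-state exceeds the yes-state in volume by x1 - 2 a1,
    plus q if x0 is odd; a1 is chosen to balance the two volumes as far as possible.\<close>
  consider "x0 = 2 * h" | "x0 = 2 * h + 1" "x1 \<le> q" | "x0 = 2 * h + 1" "q < x1"
    unfolding h_def by linarith
  then show ?thesis
  proof cases
    case 1
    have "winning_condition q (h, x1 div 2 + h)"
      using winning_condition_even_split assms unfolding 1 .
    moreover have "x1 div 2 + h \<le> x1 - x1 div 2 + h" by arith
    ultimately have "winning_condition q (h, x1 - x1 div 2 + h)"
      by (rule winning_condition_mono)
    with \<open>winning_condition q (h, x1 div 2 + h)\<close> show ?thesis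
      using that[of h "x1 div 2"] 1 by (simp add: yes_state_pair no_state_pair)
  next
    case 2
    then show ?thesis
      using that[of h x1] winning_condition_odd_split_few_lies[of q h x1] assms
      by (simp add: yes_state_pair no_state_pair ac_simps)
  next
    case 3
    then show ?thesis
      using that[of h "(x1 + q) div 2"] winning_condition_odd_split_many_lies[of q h x1] assms
      by (simp add: yes_state_pair no_state_pair ac_simps)
  qed
qed

lemma paul_wins_iff_winning_condition: "paul_wins q x \<longleftrightarrow> winning_condition q x"
proof (induction q arbitrary: x)
  case 0
  then show ?case by (cases x) simp
next
  case (Suc q)
  obtain x0 x1 where x: "x = (x0, x1)" by fastforce
  show ?case
    unfolding x paul_wins.simps Suc.IH
    using winning_condition_of_answers winning_question_exists by (metis fst_conv snd_conv)
qed

theorem theorem9: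
  fixes q n :: nat
  shows "paul_wins q (n, 0) \<longleftrightarrow>
    (if even n then 2 ^ q \<le> int n * (int q + 1)
     else 2 ^ q \<le> int n * (int q + 1) - (int q - 1))"
proof -
  have nat_le_as_int: "a \<le> b \<longleftrightarrow> int a \<le> int b" for a b :: nat by simp
  have "paul_wins q (n, 0) \<longleftrightarrow>
      2 ^ q \<le> int n * (int q + 1) \<and> (odd n \<longrightarrow> 2 ^ q + int q \<le> int n * (int q + 1) + 1)"
    unfolding paul_wins_iff_winning_condition winning_condition.simps volume.simps nat_le_as_int
    by (simp add: algebra_simps)
  moreover have "odd n \<Longrightarrow> 1 \<le> n" by (cases n) auto
  ultimately show ?thesis by (cases "q = 0") auto
qed

end
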